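(* Let $X$ be a real reflexive Banach space and let $\{F_t\}_{t \in T}$ be a non-empty family of convex existence sets in $X$ directed by inclusion, i.e. for any $t_1, t_2 \in T$ there is $t_3 \in T$ with $F_{t_1} \cup F_{t_2} \subset F_{t_3}$. Then $F = \mathrm{cl}\left(\bigcup_{t \in T} F_t\right)$ is an existence set.
   Context: For a non-empty set $F \subset X$ and $x \in X$, let $R_F(x) = \{ d \in F : \|d-c\| \le \|x-c\| \text{ for all } c \in F\}$. A non-empty set $F \subset X$ is an existence set if $R_F(x) \neq \emptyset$ for every $x \in X$. $\mathrm{cl}$ denotes norm closure. *)

theory Defs
  imports "HOL-Analysis.Analysis"
begin

text \<open>Reflexivity: the canonical embedding of X into its bidual is surjective,
  i.e. every continuous linear functional on the dual X* is evaluation at some x.\<close>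
definition reflexive_space :: "'a::real_normed_vector itself \<Rightarrow> bool" where
  "reflexive_space _ \<longleftrightarrow>
     (\<forall>\<Phi> :: ('a \<Rightarrow>\<^sub>L real) \<Rightarrow>\<^sub>L real. \<exists>x::'a. \<forall>f. blinfun_apply \<Phi> f = blinfun_apply f x)"

definition R_set :: "'a::real_normed_vector set \<Rightarrow> 'a \<Rightarrow> 'a set" where
  "R_set F x = {d \<in> F. \<forall>c\<in>F. norm (d - c) \<le> norm (x - c)}"

definition existence_set :: "'a::real_normed_vector set \<Rightarrow> bool" where
  "existence_set F \<longleftrightarrow> F \<noteq> {} \<and> (\<forall>x. R_set F x \<noteq> {})"

end

theory Submission
  imports Defs
begin

text \<open>Fix \<open>x\<close> and pick nearest points \<open>d\<^sub>t \<in> R_set (F t) x\<close>. For \<open>c \<in> F s\<close> and every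
  \<open>F t \<supseteq> F s\<close> we have \<open>\<parallel>d\<^sub>t - c\<parallel> \<le> \<parallel>x - c\<parallel>\<close>, so the net \<open>(d\<^sub>t)\<close> is bounded and, along
  an ultrafilter refining the directed family, lies eventually in the closed convex set
  \<open>cl (\<Union>F\<^sub>t) \<inter> cball c \<parallel>x - c\<parallel>\<close>. Along the ultrafilter, \<open>f (d\<^sub>t)\<close> converges for every
  \<open>f \<in> X*\<close>; by reflexivity the limit functional is evaluation at a point \<open>d\<close>. By
  Hahn--Banach separation, weak limits cannot leave closed convex sets, so \<open>d \<in> cl (\<Union>F\<^sub>t)\<close>
  and \<open>\<parallel>d - c\<parallel> \<le> \<parallel>x - c\<parallel>\<close> on \<open>\<Union>F\<^sub>t\<close>, hence on its closure.\<close>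

section \<open>Hahn--Banach for sublinear functionals\<close>

definition sublinear :: "('a::real_vector \<Rightarrow> real) \<Rightarrow> bool" where
  "sublinear p \<longleftrightarrow>
     (\<forall>x y. p (x + y) \<le> p x + p y) \<and> (\<forall>c x. 0 \<le> c \<longrightarrow> p (c *\<^sub>R x) = c * p x)"

lemma sublinear_add_le: "sublinear p \<Longrightarrow> p (x + y) \<le> p x + p y"
  unfolding sublinear_def by blast

lemma sublinear_scaleR: "sublinear p \<Longrightarrow> 0 \<le> c \<Longrightarrow> p (c *\<^sub>R x) = c * p x"
  unfolding sublinear_def by blast

lemma sublinear_zero: "sublinear p \<Longrightarrow> p 0 = 0"
  using sublinear_scaleR[of p 0 0] by simp

lemma sublinear_uminus_ge: "sublinear p \<Longrightarrow> - p x \<le> p (- x)"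
  using sublinear_add_le[of p x "- x"] sublinear_zero[of p] by simp

lemma sublinear_ge_scaleR: "sublinear p \<Longrightarrow> t * p z \<le> p (t *\<^sub>R z)"
proof (cases "0 \<le> t")
  case False
  assume p: "sublinear p"
  have "t * p z = (- t) * (- p z)" by simp
  also have "\<dots> \<le> (- t) * p (- z)"
    using False sublinear_uminus_ge[OF p] by (intro mult_left_mono) auto
  also have "\<dots> = p (t *\<^sub>R z)"
    using sublinear_scaleR[OF p, of "- t" "- z"] False by simp
  finally show ?thesis .
qed (simp add: sublinear_scaleR)

text \<open>Partial linear functionals are represented by their graphs; the Hahn--Banach
  extension is a maximal one.\<close>
definition dominated_partial_linear ::
    "('a::real_vector \<Rightarrow> real) \<Rightarrow> 'a \<Rightarrow> ('a \<times> real) set \<Rightarrow> bool" where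
  "dominated_partial_linear p z G \<longleftrightarrow>
     (\<forall>x r s. (x, r) \<in> G \<longrightarrow> (x, s) \<in> G \<longrightarrow> r = s)
     \<and> (\<forall>x r y s. (x, r) \<in> G \<longrightarrow> (y, s) \<in> G \<longrightarrow> (x + y, r + s) \<in> G)
     \<and> (\<forall>x r c. (x, r) \<in> G \<longrightarrow> (c *\<^sub>R x, c * r) \<in> G)
     \<and> (\<forall>x r. (x, r) \<in> G \<longrightarrow> r \<le> p x)
     \<and> (z, p z) \<in> G"

lemma dominated_partial_linearD:
  assumes "dominated_partial_linear p z G"
  shows dominated_partial_linear_unique: "(x, r) \<in> G \<Longrightarrow> (x, s) \<in> G \<Longrightarrow> r = s"
    and dominated_partial_linear_add: "(x, r) \<in> G \<Longrightarrow> (y, s) \<in> G \<Longrightarrow> (x + y, r + s) \<in> G"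
    and dominated_partial_linear_scaleR: "(x, r) \<in> G \<Longrightarrow> (c *\<^sub>R x, c * r) \<in> G"
    and dominated_partial_linear_le: "(x, r) \<in> G \<Longrightarrow> r \<le> p x"
    and dominated_partial_linear_base: "(z, p z) \<in> G"
  using assms unfolding dominated_partial_linear_def by blast+

lemma dominated_partial_linear_zero: "dominated_partial_linear p z G \<Longrightarrow> (0, 0) \<in> G"
  using dominated_partial_linear_scaleR[of p z G z "p z" 0]
  by (simp add: dominated_partial_linear_base)

lemma dominated_partial_linear_line:
  assumes p: "sublinear p"
  shows "dominated_partial_linear p z {(t *\<^sub>R z, t * p z) | t. True}"
proof -
  have "r = s" if "t *\<^sub>R z = u *\<^sub>R z" "r = t * p z" "s = u * p z" for t u r s
  proof (cases "t = u")
    case False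
    then have "z = 0" using that(1) by (metis scaleR_cancel_right)
    then show ?thesis using that sublinear_zero[OF p] by simp
  qed (use that in simp)
  then show ?thesis
    unfolding dominated_partial_linear_def
    by (auto simp: scaleR_add_left distrib_right sublinear_ge_scaleR[OF p]
        intro: exI[of _ 1] exI[of _ "_ + _"] exI[of _ "_ * _"])
qed

text \<open>The value \<open>a\<close> at \<open>y\<close> is chosen between \<open>sup (r - p (v - y))\<close> and
  \<open>inf (p (u + y) - s)\<close> over \<open>(v, r), (u, s) \<in> G\<close>; these are ordered because
  \<open>r + s \<le> p (v + u) \<le> p (v - y) + p (u + y)\<close>.\<close>
lemma dominated_partial_linear_extension_value:
  assumes p: "sublinear p" and G: "dominated_partial_linear p z G"
  obtains a where "\<And>x r t. (x, r) \<in> G \<Longrightarrow> r + t * a \<le> p (x + t *\<^sub>R y)"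
proof -
  have squeeze: "r - p (v - y) \<le> p (u + y) - s" if "(v, r) \<in> G" "(u, s) \<in> G" for v r u s
  proof -
    have "r + s \<le> p (v + u)"
      using dominated_partial_linear_le[OF G dominated_partial_linear_add[OF G that]] .
    also have "\<dots> \<le> p (v - y) + p (u + y)"
      using sublinear_add_le[OF p, of "v - y" "u + y"] by simp
    finally show ?thesis by simp
  qed
  define S where "S = {r - p (v - y) | v r. (v, r) \<in> G}"
  have G0: "(0, 0) \<in> G" using dominated_partial_linear_zero[OF G] .
  have "S \<noteq> {}" using G0 unfolding S_def by blast
  moreover have "bdd_above S" unfolding S_def bdd_above_def using squeeze[OF _ G0] by auto
  ultimately have lower: "r - p (v - y) \<le> Sup S" if "(v, r) \<in> G" for v r
    using that by (auto simp: S_def intro!: cSup_upper)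
  have upper: "Sup S \<le> p (u + y) - s" if "(u, s) \<in> G" for u s
    using that squeeze \<open>S \<noteq> {}\<close> by (auto simp: S_def intro!: cSup_least)
  have "r + t * Sup S \<le> p (x + t *\<^sub>R y)" if x: "(x, r) \<in> G" for x r t
  proof (cases t "0 :: real" rule: linorder_cases)
    case less
    have "inverse (- t) * r - p (inverse (- t) *\<^sub>R x - y) \<le> Sup S"
      using lower[OF dominated_partial_linear_scaleR[OF G x]] .
    then have "(- t) * (inverse (- t) * r - p (inverse (- t) *\<^sub>R x - y)) \<le> (- t) * Sup S"
      using less by (intro mult_left_mono) auto
    moreover have "(- t) * p (inverse (- t) *\<^sub>R x - y) = p (x + t *\<^sub>R y)"
      using sublinear_scaleR[OF p, of "- t" "inverse (- t) *\<^sub>R x - y"] less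
      by (simp add: scaleR_diff_right)
    ultimately show ?thesis using less by (simp add: right_diff_distrib mult.assoc[symmetric])
  next
    case equal
    then show ?thesis using dominated_partial_linear_le[OF G x] by simp
  next
    case greater
    have "Sup S \<le> p (inverse t *\<^sub>R x + y) - inverse t * r"
      using upper[OF dominated_partial_linear_scaleR[OF G x]] .
    then have "t * Sup S \<le> t * (p (inverse t *\<^sub>R x + y) - inverse t * r)"
      using greater by (intro mult_left_mono) auto
    moreover have "t * p (inverse t *\<^sub>R x + y) = p (x + t *\<^sub>R y)"
      using sublinear_scaleR[OF p, of t "inverse t *\<^sub>R x + y"] greater
      by (simp add: scaleR_add_right)
    ultimately show ?thesis using greater by (simp add: right_diff_distrib mult.assoc[symmetric])
  qed
  then show ?thesis using that by blast
qed

lemma dominated_partial_linear_decomposition_unique: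
  assumes G: "dominated_partial_linear p z G" and y: "y \<notin> fst ` G"
    and x: "(x1, r1) \<in> G" "(x2, r2) \<in> G" and eq: "x1 + t1 *\<^sub>R y = x2 + t2 *\<^sub>R y"
  shows "t1 = t2 \<and> r1 = r2"
proof -
  have diff: "(x1 - x2, r1 - r2) \<in> G"
    using dominated_partial_linear_add[OF G x(1) dominated_partial_linear_scaleR[OF G x(2), of "-1"]]
    by simp
  have "t1 = t2"
  proof (rule ccontr)
    assume "t1 \<noteq> t2"
    have "x1 - x2 = (t2 - t1) *\<^sub>R y" using eq by (simp add: algebra_simps)
    then have "y = inverse (t2 - t1) *\<^sub>R (x1 - x2)" using \<open>t1 \<noteq> t2\<close> by simp
    then have "(y, inverse (t2 - t1) * (r1 - r2)) \<in> G"
      using dominated_partial_linear_scaleR[OF G diff] by simp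
    then show False using y by force
  qed
  then show ?thesis
    using eq dominated_partial_linear_unique[OF G] x by auto
qed

lemma dominated_partial_linear_extend:
  assumes p: "sublinear p" and G: "dominated_partial_linear p z G" and y: "y \<notin> fst ` G"
  shows "\<exists>G'. dominated_partial_linear p z G' \<and> G \<subset> G'"
proof -
  obtain a where a: "\<And>x r t. (x, r) \<in> G \<Longrightarrow> r + t * a \<le> p (x + t *\<^sub>R y)"
    using dominated_partial_linear_extension_value[OF p G] by blast
  define G' where "G' = {(x + t *\<^sub>R y, r + t * a) | x r t. (x, r) \<in> G}"
  have inG': "(x + t *\<^sub>R y, r + t * a) \<in> G'" if "(x, r) \<in> G" for x r t
    using that unfolding G'_def by blast
  have "dominated_partial_linear p z G'"
    unfolding dominated_partial_linear_def
  proof (intro conjI allI impI)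
    show "(z, p z) \<in> G'"
      using inG'[OF dominated_partial_linear_base[OF G], of 0] by simp
  next
    fix x r s assume "(x, r) \<in> G'" "(x, s) \<in> G'"
    then obtain x1 r1 t1 x2 r2 t2 where "(x1, r1) \<in> G" "(x2, r2) \<in> G"
      and "x = x1 + t1 *\<^sub>R y" "r = r1 + t1 * a" "x = x2 + t2 *\<^sub>R y" "s = r2 + t2 * a"
      unfolding G'_def by blast
    then show "r = s"
      using dominated_partial_linear_decomposition_unique[OF G y] by metis
  next
    fix x r x' s assume "(x, r) \<in> G'" "(x', s) \<in> G'"
    then obtain x1 r1 t1 x2 r2 t2 where "(x1, r1) \<in> G" "(x2, r2) \<in> G"
      and "x = x1 + t1 *\<^sub>R y" "r = r1 + t1 * a" "x' = x2 + t2 *\<^sub>R y" "s = r2 + t2 * a"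
      unfolding G'_def by blast
    then show "(x + x', r + s) \<in> G'"
      using inG'[OF dominated_partial_linear_add[OF G], of x1 r1 x2 r2 "t1 + t2"]
      by (simp add: algebra_simps)
  next
    fix x r c assume "(x, r) \<in> G'"
    then obtain x1 r1 t where "(x1, r1) \<in> G" "x = x1 + t *\<^sub>R y" "r = r1 + t * a"
      unfolding G'_def by blast
    then show "(c *\<^sub>R x, c * r) \<in> G'"
      using inG'[OF dominated_partial_linear_scaleR[OF G], of x1 r1 c "c * t"]
      by (simp add: algebra_simps)
  next
    fix x r assume "(x, r) \<in> G'"
    then show "r \<le> p x" unfolding G'_def using a by blast
  qed
  moreover have "G \<subseteq> G'" using inG'[of _ _ 0] by force
  moreover have "(y, a) \<in> G' - G"
    using inG'[OF dominated_partial_linear_zero[OF G], of 1] y by force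
  ultimately show ?thesis by blast
qed

lemma dominated_partial_linear_chain_Union:
  assumes "C \<noteq> {}" and chain: "subset.chain {G. dominated_partial_linear p z G} C"
  shows "dominated_partial_linear p z (\<Union>C)"
proof -
  have dpl: "dominated_partial_linear p z G" if "G \<in> C" for G
    using chain that unfolding subset.chain_def by blast
  have common: "\<exists>G\<in>C. u \<in> G \<and> v \<in> G" if "u \<in> \<Union>C" "v \<in> \<Union>C" for u v
    using that chain unfolding subset.chain_def by blast
  show ?thesis
    unfolding dominated_partial_linear_def
  proof (intro conjI allI impI)
    show "(z, p z) \<in> \<Union>C"
      using \<open>C \<noteq> {}\<close> dpl dominated_partial_linear_base by blast
  next
    fix x r s assume "(x, r) \<in> \<Union>C" "(x, s) \<in> \<Union>C"
    then obtain G where "G \<in> C" "(x, r) \<in> G" "(x, s) \<in> G" using common by blast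
    then show "r = s" using dpl dominated_partial_linear_unique by blast
  next
    fix x r y s assume "(x, r) \<in> \<Union>C" "(y, s) \<in> \<Union>C"
    then obtain G where "G \<in> C" "(x, r) \<in> G" "(y, s) \<in> G" using common by blast
    then show "(x + y, r + s) \<in> \<Union>C" using dpl dominated_partial_linear_add by blast
  next
    fix x r c assume "(x, r) \<in> \<Union>C"
    then show "(c *\<^sub>R x, c * r) \<in> \<Union>C" using dpl dominated_partial_linear_scaleR by blast
  next
    fix x r assume "(x, r) \<in> \<Union>C"
    then show "r \<le> p x" using dpl dominated_partial_linear_le by blast
  qed
qed

theorem hahn_banach_sublinear:
  assumes p: "sublinear p"
  obtains g where "linear g" "\<And>x. g x \<le> p x" "g z = p z"
proof -
  let ?D = "{G. dominated_partial_linear p z G}"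
  have "\<exists>M\<in>?D. \<forall>G\<in>?D. M \<subseteq> G \<longrightarrow> G = M"
  proof (rule subset_Zorn_nonempty)
    show "?D \<noteq> {}" using dominated_partial_linear_line[OF p] by blast
    show "\<Union>C \<in> ?D" if "C \<noteq> {}" "subset.chain ?D C" for C
      using dominated_partial_linear_chain_Union[OF that] by simp
  qed
  then obtain M where M: "dominated_partial_linear p z M"
    and max: "\<And>G. dominated_partial_linear p z G \<Longrightarrow> M \<subseteq> G \<Longrightarrow> G = M"
    by blast
  have total: "x \<in> fst ` M" for x
  proof (rule ccontr)
    assume "x \<notin> fst ` M"
    then obtain G where "dominated_partial_linear p z G" "M \<subset> G"
      using dominated_partial_linear_extend[OF p M] by blast
    then show False using max[of G] by blast
  qed
  define g where "g x = (THE r. (x, r) \<in> M)" for x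
  have g: "(x, r) \<in> M \<longleftrightarrow> r = g x" for x r
  proof -
    obtain r0 where r0: "(x, r0) \<in> M" using total[of x] by force
    then have "g x = r0" unfolding g_def
      by (rule the_equality) (use dominated_partial_linear_unique[OF M r0] in blast)
    then show ?thesis using r0 dominated_partial_linear_unique[OF M] by blast
  qed
  have gM: "(x, g x) \<in> M" for x by (simp add: g)
  have "linear g"
  proof
    show "g (x + y) = g x + g y" for x y
      using dominated_partial_linear_add[OF M gM gM] by (simp add: g)
    show "g (c *\<^sub>R x) = c *\<^sub>R g x" for c x
      using dominated_partial_linear_scaleR[OF M gM] by (simp add: g)
  qed
  moreover have "g x \<le> p x" for x
    using dominated_partial_linear_le[OF M gM] .
  moreover have "g z = p z"
    using dominated_partial_linear_base[OF M] by (simp add: g)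
  ultimately show thesis using that by blast
qed

section \<open>Separating a point from a closed convex set\<close>

lemma infdist_geI: "A \<noteq> {} \<Longrightarrow> (\<And>a. a \<in> A \<Longrightarrow> e \<le> dist x a) \<Longrightarrow> e \<le> infdist x A"
  by (simp add: infdist_notempty cINF_greatest)

lemma sublinear_infdist_convex_cone:
  fixes K :: "'a::real_normed_vector set"
  assumes K: "convex_cone K"
  shows "sublinear (\<lambda>y. infdist y K)"
  unfolding sublinear_def
proof (intro conjI allI impI)
  have "K \<noteq> {}" using convex_cone_nonempty[OF K] .
  fix x y :: 'a
  have "infdist (x + y) K - infdist x K \<le> dist y k2" if k2: "k2 \<in> K" for k2
  proof -
    have "infdist (x + y) K - dist y k2 \<le> dist x k1" if k1: "k1 \<in> K" for k1
    proof -
      have "infdist (x + y) K \<le> dist (x + y) (k1 + k2)"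
        using infdist_le[OF convex_cone_add[OF K k1 k2]] .
      also have "\<dots> \<le> dist x k1 + dist y k2"
        by (simp add: dist_norm) (metis add_diff_add norm_triangle_ineq)
      finally show ?thesis by simp
    qed
    then show ?thesis using infdist_geI[OF \<open>K \<noteq> {}\<close>] by fastforce
  qed
  then have "infdist (x + y) K - infdist x K \<le> infdist y K"
    using infdist_geI[OF \<open>K \<noteq> {}\<close>] by blast
  then show "infdist (x + y) K \<le> infdist x K + infdist y K" by simp
next
  have "K \<noteq> {}" using convex_cone_nonempty[OF K] .
  have scale_le: "infdist (s *\<^sub>R u) K \<le> s * infdist u K" if s: "0 < s" for s u
  proof -
    have "infdist (s *\<^sub>R u) K / s \<le> dist u k" if "k \<in> K" for k
    proof -
      have "infdist (s *\<^sub>R u) K \<le> dist (s *\<^sub>R u) (s *\<^sub>R k)"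
        using infdist_le[OF convex_cone_scaleR[OF K _ that]] s by simp
      also have "\<dots> = s * dist u k"
        using s by (simp add: dist_norm scaleR_diff_right[symmetric])
      finally show ?thesis using s by (simp add: divide_le_eq mult.commute)
    qed
    then have "infdist (s *\<^sub>R u) K / s \<le> infdist u K" by (rule infdist_geI[OF \<open>K \<noteq> {}\<close>])
    then show ?thesis using s by (simp add: divide_le_eq mult.commute)
  qed
  fix c :: real and x :: 'a
  assume "0 \<le> c"
  show "infdist (c *\<^sub>R x) K = c * infdist x K"
  proof (cases "c = 0")
    case True
    then show ?thesis using convex_cone_contains_0[OF K] by simp
  next
    case False
    with \<open>0 \<le> c\<close> have c: "0 < c" by simp
    have "infdist x K \<le> inverse c * infdist (c *\<^sub>R x) K"
      using scale_le[of "inverse c" "c *\<^sub>R x"] c by simp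
    then have "c * infdist x K \<le> infdist (c *\<^sub>R x) K"
      using c by (simp add: field_simps)
    then show ?thesis using scale_le[OF c, of x] by simp
  qed
qed

text \<open>The point \<open>d - c0\<close> stays at distance \<open>\<delta>\<close> from the cone spanned by the
  \<open>\<delta>/2\<close>-thickening of \<open>C - d\<close>: rewrite the difference as
  \<open>(1 + t) (d - c') - t w\<close> with \<open>c'\<close> a convex combination of \<open>c0\<close> and \<open>c\<close>.\<close>
lemma norm_diff_thickened_cone_ge:
  fixes C :: "'a::real_normed_vector set"
  assumes C: "convex C" "c0 \<in> C" "c \<in> C" and far: "\<And>c'. c' \<in> C \<Longrightarrow> \<delta> \<le> dist d c'"
    and t: "0 \<le> t" and w: "norm w \<le> \<delta> / 2"
  shows "\<delta> \<le> norm ((d - c0) - t *\<^sub>R (c + w - d))"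
proof -
  define c' where "c' = (1 / (1 + t)) *\<^sub>R c0 + (t / (1 + t)) *\<^sub>R c"
  have t1: "(1 + t) * (1 / (1 + t)) = 1" "(1 + t) * (t / (1 + t)) = t"
    using t by simp_all
  have "c' \<in> C"
    unfolding c'_def
  proof (rule convexD[OF C])
    show "1 / (1 + t) + t / (1 + t) = 1" using t by (simp add: add_divide_distrib[symmetric])
  qed (use t in auto)
  have "(1 + t) *\<^sub>R c' = c0 + t *\<^sub>R c"
    unfolding c'_def scaleR_add_right scaleR_scaleR t1 by simp
  then have eq: "(d - c0) - t *\<^sub>R (c + w - d) = (1 + t) *\<^sub>R (d - c') - t *\<^sub>R w"
    by (simp add: algebra_simps)
  have "(1 + t) * \<delta> \<le> norm ((1 + t) *\<^sub>R (d - c'))"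
    using far[OF \<open>c' \<in> C\<close>] t by (simp add: dist_norm mult_left_mono)
  moreover have "norm (t *\<^sub>R w) \<le> t * (\<delta> / 2)"
    using mult_left_mono[OF w t] t by simp
  ultimately have "(1 + t) * \<delta> - t * (\<delta> / 2) \<le> norm ((d - c0) - t *\<^sub>R (c + w - d))"
    unfolding eq using norm_triangle_ineq2[of "(1 + t) *\<^sub>R (d - c')" "t *\<^sub>R w"] by linarith
  moreover have "0 \<le> t * \<delta>"
    using t w norm_ge_zero[of w] by (intro mult_nonneg_nonneg) linarith+
  ultimately show ?thesis by (simp add: ring_distribs mult.commute)
qed

lemma infdist_cone_thickening_ge:
  fixes C :: "'a::real_normed_vector set"
  assumes C: "convex C" "c0 \<in> C" and far: "\<And>c. c \<in> C \<Longrightarrow> \<delta> \<le> dist d c" and "0 < \<delta>"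
  shows "\<delta> \<le> infdist (d - c0) (convex_cone hull ((\<lambda>v. v - d) ` (C + ball 0 (\<delta> / 2))))"
proof -
  define S where "S = (\<lambda>v. v - d) ` (C + ball 0 (\<delta> / 2))"
  have "convex S"
    unfolding S_def by (intro convex_translation_subtract convex_set_plus C convex_ball)
  moreover have "c0 - d \<in> S"
    unfolding S_def using C(2) \<open>0 < \<delta>\<close> by (intro rev_image_eqI[of "c0 + 0"] set_plus_intro) auto
  ultimately have K: "convex_cone hull S = (\<Union>x\<in>S. \<Union>t\<in>{0..}. {t *\<^sub>R x})"
    using convex_cone_hull_convex_hull_nonempty[of S] convex_hull_eq[of S] by auto
  show ?thesis
    unfolding S_def[symmetric]
  proof (rule infdist_geI)
    show "convex_cone hull S \<noteq> {}" by (rule convex_cone_hull_nonempty)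
  next
    fix k assume "k \<in> convex_cone hull S"
    then have "k \<in> (\<Union>x\<in>S. \<Union>t\<in>{0..}. {t *\<^sub>R x})" by (simp only: K)
    then obtain t c w where "0 \<le> t" "c \<in> C" "norm w < \<delta> / 2" "k = t *\<^sub>R (c + w - d)"
      unfolding S_def by (auto elim!: set_plus_elim)
    then show "\<delta> \<le> dist (d - c0) k"
      using norm_diff_thickened_cone_ge[OF C(1,2) _ far, of c t w] by (simp add: dist_norm)
  qed
qed

lemma bounded_linear_le_infdist_convex_cone:
  fixes K :: "'a::real_normed_vector set"
  assumes K: "convex_cone K"
  obtains g :: "'a \<Rightarrow> real"
  where "bounded_linear g" "\<And>x. g x \<le> infdist x K" "g z = infdist z K"
proof -
  obtain g where g: "linear g" "\<And>x. g x \<le> infdist x K" "g z = infdist z K"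
    using hahn_banach_sublinear[OF sublinear_infdist_convex_cone[OF K]] by blast
  have le_norm: "g x \<le> norm x" for x
    using g(2)[of x] infdist_le[OF convex_cone_contains_0[OF K], of x] by simp
  have "bounded_linear g"
  proof (rule bounded_linear_intro[where K = 1])
    show "g (x + y) = g x + g y" "g (r *\<^sub>R x) = r *\<^sub>R g x" for x y r
      using linear_add[OF g(1)] linear_scale[OF g(1)] by simp_all
    show "norm (g x) \<le> norm x * 1" for x
      using le_norm[of x] le_norm[of "- x"] linear_neg[OF g(1), of x] by auto
  qed
  then show thesis using that g by blast
qed

text \<open>The functional is dominated by the distance to the cone spanned by the
  \<open>\<delta>/2\<close>-thickening of \<open>C - d\<close>, where \<open>\<delta>\<close> is the distance from \<open>d\<close> to \<open>C\<close>.\<close>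
theorem separation_closed_convex_point:
  fixes C :: "'a::real_normed_vector set"
  assumes closed: "closed C" and convex: "convex C" and d: "d \<notin> C"
  obtains g :: "'a \<Rightarrow> real" and \<alpha> :: real
  where "bounded_linear g" "\<And>c. c \<in> C \<Longrightarrow> g c \<le> \<alpha>" "\<alpha> < g d"
proof (cases "C = {}")
  case True
  then show thesis using that[of "\<lambda>_. 0" "-1"] by simp
next
  case False
  then obtain c0 where c0: "c0 \<in> C" by blast
  define \<delta> where "\<delta> = infdist d C"
  have \<delta>: "0 < \<delta>" unfolding \<delta>_def using infdist_pos_not_in_closed[OF closed False d] .
  define K where "K = convex_cone hull ((\<lambda>v. v - d) ` (C + ball 0 (\<delta> / 2)))"
  define z where "z = d - c0"
  have "convex_cone K" unfolding K_def by (rule convex_cone_convex_cone_hull)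
  then obtain g where g: "bounded_linear g" "\<And>x. g x \<le> infdist x K" "g z = infdist z K"
    using bounded_linear_le_infdist_convex_cone[of K z] by blast
  have far: "\<delta> \<le> dist d c" if "c \<in> C" for c
    unfolding \<delta>_def using infdist_le[OF that] .
  have "\<delta> \<le> infdist z K"
    unfolding z_def K_def using infdist_cone_thickening_ge[OF convex c0 far \<delta>] .
  moreover have "infdist z K \<le> norm z"
    using infdist_le[OF convex_cone_hull_contains_0, of z] unfolding K_def by simp
  ultimately have "0 < norm z" using \<delta> by linarith
  define s where "s = \<delta> / (4 * norm z)"
  have s: "0 < s" "norm (s *\<^sub>R z) < \<delta> / 2"
    using \<open>0 < norm z\<close> \<delta> by (simp_all add: s_def)
  have "g c \<le> g d - s * \<delta>" if "c \<in> C" for c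
  proof -
    have "c + s *\<^sub>R z - d \<in> K"
      unfolding K_def using that s(2)
      by (intro hull_inc rev_image_eqI[of "c + s *\<^sub>R z"] set_plus_intro) auto
    then have "g (c + s *\<^sub>R z - d) \<le> 0"
      using g(2)[of "c + s *\<^sub>R z - d"] by simp
    moreover have "g (c + s *\<^sub>R z - d) = g c + s * infdist z K - g d"
      using g(3) by (simp add: linear_simps g(1))
    moreover have "s * \<delta> \<le> s * infdist z K" using \<open>\<delta> \<le> infdist z K\<close> s by simp
    ultimately show ?thesis by linarith
  qed
  moreover have "g d - s * \<delta> < g d" using s \<delta> by simp
  ultimately show thesis using that g(1) by blast
qed

section \<open>Ultrafilters\<close>

definition ultrafilter :: "'a filter \<Rightarrow> bool" where
  "ultrafilter U \<longleftrightarrow> U \<noteq> bot \<and> (\<forall>P. eventually P U \<or> eventually (\<lambda>x. \<not> P x) U)"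

lemma Inf_chain_neq_bot:
  fixes C :: "'a filter set"
  assumes "C \<noteq> {}" and proper: "\<And>F. F \<in> C \<Longrightarrow> F \<noteq> bot"
    and chain: "\<And>F G. F \<in> C \<Longrightarrow> G \<in> C \<Longrightarrow> F \<le> G \<or> G \<le> F"
  shows "Inf C \<noteq> bot"
proof
  have base: "\<exists>H\<in>C. H \<le> inf F G" if "F \<in> C" "G \<in> C" for F G
    using chain[OF that] that by (metis inf.orderE inf_commute order_refl)
  assume "Inf C = bot"
  then have "eventually (\<lambda>_. False) (Inf C)" by simp
  then obtain F where "F \<in> C" "eventually (\<lambda>_. False) F"
    using eventually_Inf_base[OF \<open>C \<noteq> {}\<close> base] by blast
  then show False using proper by (simp add: eventually_False)
qed

lemma exists_ultrafilter_le:
  fixes F :: "'a filter"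
  assumes "F \<noteq> bot"
  obtains U where "ultrafilter U" "U \<le> F"
proof -
  define A where "A = {G. G \<noteq> bot \<and> G \<le> F}"
  have "partial_order_on A (relation_of (\<ge>) A)"
    by (rule partial_order_on_relation_ofI) auto
  then have "\<exists>U\<in>A. \<forall>G\<in>A. G \<le> U \<longrightarrow> G = U"
  proof (rule predicate_Zorn)
    fix C assume "C \<in> Chains (relation_of (\<ge>) A)"
    then have CA: "C \<subseteq> A" and chain: "\<And>G H. G \<in> C \<Longrightarrow> H \<in> C \<Longrightarrow> G \<le> H \<or> H \<le> G"
      unfolding Chains_def relation_of_def by auto
    show "\<exists>U\<in>A. \<forall>G\<in>C. U \<le> G"
    proof (cases "C = {}")
      case True
      then show ?thesis using assms by (auto simp: A_def)
    next
      case False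
      then obtain G where "G \<in> C" by blast
      then have "Inf C \<le> F" using CA Inf_lower2[of G C F] by (auto simp: A_def)
      moreover have "Inf C \<noteq> bot"
        using Inf_chain_neq_bot[OF False _ chain] CA by (auto simp: A_def)
      ultimately show ?thesis by (auto simp: A_def intro: Inf_lower)
    qed
  qed
  then obtain U where U: "U \<noteq> bot" "U \<le> F"
    and max: "\<And>G. G \<noteq> bot \<Longrightarrow> G \<le> F \<Longrightarrow> G \<le> U \<Longrightarrow> G = U"
    unfolding A_def by blast
  have "eventually P U \<or> eventually (\<lambda>x. \<not> P x) U" for P
  proof (rule disjCI)
    assume not_neg: "\<not> eventually (\<lambda>x. \<not> P x) U"
    define G where "G = inf U (principal {x. P x})"
    have "G \<noteq> bot"
      using not_neg by (auto simp: G_def eventually_inf_principal simp flip: eventually_False)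
    moreover have "G \<le> U" by (simp add: G_def)
    ultimately have "G = U" using max order_trans[OF _ U(2)] by blast
    then show "eventually P U"
      using eventually_inf_principal[of P U "{x. P x}"] by (simp add: G_def)
  qed
  then show thesis using that U by (auto simp: ultrafilter_def)
qed

lemma ultrafilter_bounded_convergent:
  fixes h :: "'i \<Rightarrow> real"
  assumes U: "ultrafilter U" and bounded: "eventually (\<lambda>t. \<bar>h t\<bar> \<le> M) U"
  obtains L where "(h \<longlongrightarrow> L) U"
proof -
  have "filtermap h U \<noteq> bot" using U by (simp add: ultrafilter_def filtermap_bot_iff)
  moreover have "eventually (\<lambda>y. y \<in> {-M..M}) (filtermap h U)"
    unfolding eventually_filtermap using bounded by (rule eventually_mono) auto
  ultimately obtain L where L: "inf (nhds L) (filtermap h U) \<noteq> bot"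
    using compact_filter[THEN iffD1, OF compact_Icc] by blast
  have "(h \<longlongrightarrow> L) U"
  proof (rule topological_tendstoI)
    fix S :: "real set" assume "open S" "L \<in> S"
    show "eventually (\<lambda>t. h t \<in> S) U"
    proof (rule ccontr)
      assume "\<not> eventually (\<lambda>t. h t \<in> S) U"
      then have "eventually (\<lambda>y. y \<notin> S) (filtermap h U)"
        using U by (auto simp: ultrafilter_def eventually_filtermap)
      moreover have "eventually (\<lambda>y. y \<in> S) (nhds L)"
        using \<open>open S\<close> \<open>L \<in> S\<close> by (rule eventually_nhds_in_open)
      ultimately have "eventually (\<lambda>_. False) (inf (nhds L) (filtermap h U))"
        unfolding eventually_inf by blast
      then show False using L by (simp add: eventually_False)
    qed
  qed
  then show thesis using that by blast
qed

lemma directed_ultrafilter: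
  assumes "T \<noteq> {}" and "transp R"
    and directed: "\<And>a b. a \<in> T \<Longrightarrow> b \<in> T \<Longrightarrow> \<exists>c\<in>T. R a c \<and> R b c"
  obtains U where "ultrafilter U" "\<And>s. s \<in> T \<Longrightarrow> eventually (\<lambda>t. t \<in> T \<and> R s t) U"
proof -
  define N where "N = (INF s\<in>T. principal {t \<in> T. R s t})"
  have eventually_N: "eventually P N \<longleftrightarrow> (\<exists>s\<in>T. \<forall>t\<in>T. R s t \<longrightarrow> P t)" for P
    unfolding N_def
  proof (subst eventually_INF_base)
    show "\<exists>c\<in>T. principal {t \<in> T. R c t} \<le> inf (principal {t \<in> T. R a t}) (principal {t \<in> T. R b t})"
      if "a \<in> T" "b \<in> T" for a b
      using directed[OF that] \<open>transp R\<close> by (auto dest: transpD)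
  qed (use \<open>T \<noteq> {}\<close> in \<open>auto simp: eventually_principal\<close>)
  have "N \<noteq> bot"
    using eventually_N[of "\<lambda>_. False"] \<open>T \<noteq> {}\<close> directed by (auto simp flip: eventually_False)
  then obtain U where "ultrafilter U" "U \<le> N" using exists_ultrafilter_le by blast
  moreover have "eventually (\<lambda>t. t \<in> T \<and> R s t) N" if "s \<in> T" for s
    using that eventually_N by blast
  ultimately show thesis using that filter_leD by blast
qed

section \<open>Weak limits in reflexive spaces\<close>

text \<open>The limits of \<open>f (h t)\<close> define a bounded functional on the dual, which
  reflexivity represents as evaluation at a point.\<close>
lemma reflexive_space_ultrafilter_weak_limit:
  fixes h :: "'i \<Rightarrow> 'a::real_normed_vector"
  assumes "reflexive_space TYPE('a)" and U: "ultrafilter U"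
    and bounded: "eventually (\<lambda>t. norm (h t) \<le> M) U"
  obtains d where "\<And>f :: 'a \<Rightarrow>\<^sub>L real. ((\<lambda>t. f (h t)) \<longlongrightarrow> f d) U"
proof -
  have "U \<noteq> bot" using U by (simp add: ultrafilter_def)
  have f_bounded: "eventually (\<lambda>t. \<bar>f (h t)\<bar> \<le> norm f * M) U" for f :: "'a \<Rightarrow>\<^sub>L real"
    using bounded by (rule eventually_mono)
      (metis norm_blinfun real_norm_def mult_left_mono norm_ge_zero order_trans)
  define \<phi> where "\<phi> f = Lim U (\<lambda>t. f (h t))" for f :: "'a \<Rightarrow>\<^sub>L real"
  have \<phi>: "((\<lambda>t. f (h t)) \<longlongrightarrow> \<phi> f) U" for f :: "'a \<Rightarrow>\<^sub>L real"
  proof -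
    obtain L where L: "((\<lambda>t. f (h t)) \<longlongrightarrow> L) U"
      using ultrafilter_bounded_convergent[OF U f_bounded] .
    moreover have "\<phi> f = L"
      unfolding \<phi>_def using \<open>U \<noteq> bot\<close> L by (rule tendsto_Lim)
    ultimately show ?thesis by simp
  qed
  have "bounded_linear \<phi>"
  proof (rule bounded_linear_intro[where K = M])
    fix f g :: "'a \<Rightarrow>\<^sub>L real" and r :: real
    have "((\<lambda>t. (f + g) (h t)) \<longlongrightarrow> \<phi> f + \<phi> g) U"
      using tendsto_add[OF \<phi>[of f] \<phi>[of g]] by (simp add: plus_blinfun.rep_eq)
    then show "\<phi> (f + g) = \<phi> f + \<phi> g"
      using tendsto_unique[OF \<open>U \<noteq> bot\<close> \<phi>[of "f + g"]] by blast
    have "((\<lambda>t. (r *\<^sub>R f) (h t)) \<longlongrightarrow> r *\<^sub>R \<phi> f) U"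
      using tendsto_scaleR[OF tendsto_const \<phi>[of f]] by (simp add: scaleR_blinfun.rep_eq)
    then show "\<phi> (r *\<^sub>R f) = r *\<^sub>R \<phi> f"
      using tendsto_unique[OF \<open>U \<noteq> bot\<close> \<phi>[of "r *\<^sub>R f"]] by blast
    show "norm (\<phi> f) \<le> norm f * M"
      using tendsto_upperbound[OF tendsto_rabs[OF \<phi>[of f]] f_bounded \<open>U \<noteq> bot\<close>] by simp
  qed
  then obtain d where d: "\<And>f :: 'a \<Rightarrow>\<^sub>L real. \<phi> f = f d"
    using assms(1) bounded_linear_Blinfun_apply unfolding reflexive_space_def by metis
  have "((\<lambda>t. f (h t)) \<longlongrightarrow> f d) U" for f :: "'a \<Rightarrow>\<^sub>L real"
    using \<phi>[of f] d[of f] by simp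
  then show thesis by (rule that)
qed

lemma weak_limit_mem_closed_convex:
  fixes S :: "'a::real_normed_vector set"
  assumes "closed S" "convex S" "U \<noteq> bot" and eventually_in: "eventually (\<lambda>t. h t \<in> S) U"
    and weak_limit: "\<And>f :: 'a \<Rightarrow>\<^sub>L real. ((\<lambda>t. f (h t)) \<longlongrightarrow> f d) U"
  shows "d \<in> S"
proof (rule ccontr)
  assume "d \<notin> S"
  with assms(1,2) obtain g :: "'a \<Rightarrow> real" and \<alpha>
    where g: "bounded_linear g" "\<And>c. c \<in> S \<Longrightarrow> g c \<le> \<alpha>" "\<alpha> < g d"
    by (rule separation_closed_convex_point) blast
  have "eventually (\<lambda>t. Blinfun g (h t) \<le> \<alpha>) U"
    using eventually_in by (rule eventually_mono) (simp add: bounded_linear_Blinfun_apply g)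
  then have "Blinfun g d \<le> \<alpha>"
    using tendsto_upperbound[OF weak_limit _ \<open>U \<noteq> bot\<close>] by blast
  then show False using g by (simp add: bounded_linear_Blinfun_apply)
qed

section \<open>Directed unions of convex existence sets\<close>

lemma convex_UN_directed:
  assumes "\<And>t. t \<in> T \<Longrightarrow> convex (F t)"
    and directed: "\<And>t1 t2. t1 \<in> T \<Longrightarrow> t2 \<in> T \<Longrightarrow> \<exists>t3\<in>T. F t1 \<union> F t2 \<subseteq> F t3"
  shows "convex (\<Union>t\<in>T. F t)"
proof (rule convexI)
  fix x y and u v :: real
  assume "x \<in> (\<Union>t\<in>T. F t)" "y \<in> (\<Union>t\<in>T. F t)" and uv: "0 \<le> u" "0 \<le> v" "u + v = 1"
  then obtain t1 t2 where "t1 \<in> T" "t2 \<in> T" "x \<in> F t1" "y \<in> F t2" by blast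
  then obtain t where "t \<in> T" "x \<in> F t" "y \<in> F t" using directed by blast
  then have "u *\<^sub>R x + v *\<^sub>R y \<in> F t" using assms(1) convexD uv by blast
  then show "u *\<^sub>R x + v *\<^sub>R y \<in> (\<Union>t\<in>T. F t)" using \<open>t \<in> T\<close> by blast
qed

lemma R_set_closure:
  assumes "d \<in> closure A" and "\<And>c. c \<in> A \<Longrightarrow> norm (d - c) \<le> norm (x - c)"
  shows "d \<in> R_set (closure A) x"
proof -
  have "closed {c. norm (d - c) \<le> norm (x - c)}"
    by (intro closed_Collect_le continuous_intros)
  moreover have "A \<subseteq> {c. norm (d - c) \<le> norm (x - c)}"
    using assms(2) by blast
  ultimately have "closure A \<subseteq> {c. norm (d - c) \<le> norm (x - c)}"
    by (simp add: closure_minimal)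
  then show ?thesis using assms(1) unfolding R_set_def by blast
qed
text \<open>The nearest point is the weak limit of the net \<open>n\<close>, which is bounded because it
  eventually lies in the ball around \<open>c0\<close>.\<close>
lemma R_set_closure_nonempty_weak_limit:
  fixes A :: "'a::real_normed_vector set" and n :: "'i \<Rightarrow> 'a"
  assumes "reflexive_space TYPE('a)" and U: "ultrafilter U" and "convex (closure A)"
    and "c0 \<in> A" and near: "\<And>c. c \<in> A \<Longrightarrow> eventually (\<lambda>t. n t \<in> closure A \<inter> cball c (norm (x - c))) U"
  shows "R_set (closure A) x \<noteq> {}"
proof -
  have "eventually (\<lambda>t. norm (n t) \<le> norm c0 + norm (x - c0)) U"
    using near[OF \<open>c0 \<in> A\<close>]
  proof (rule eventually_mono)
    fix t assume "n t \<in> closure A \<inter> cball c0 (norm (x - c0))"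
    then have "norm (n t - c0) \<le> norm (x - c0)" by (simp add: dist_norm norm_minus_commute)
    then show "norm (n t) \<le> norm c0 + norm (x - c0)" using norm_triangle_sub[of "n t" c0] by linarith
  qed
  then obtain d where d: "\<And>f :: 'a \<Rightarrow>\<^sub>L real. ((\<lambda>t. f (n t)) \<longlongrightarrow> f d) U"
    using reflexive_space_ultrafilter_weak_limit[OF assms(1) U] by blast
  have "d \<in> closure A \<inter> cball c (norm (x - c))" if "c \<in> A" for c
    using \<open>convex (closure A)\<close> U near[OF that] d
    by (intro weak_limit_mem_closed_convex closed_Int convex_Int convex_cball closed_cball closed_closure)
      (auto simp: ultrafilter_def)
  then have "d \<in> R_set (closure A) x"
    using \<open>c0 \<in> A\<close> by (intro R_set_closure) (auto simp: dist_norm norm_minus_commute)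
  then show ?thesis by blast
qed

theorem lemma13:
  fixes F :: "'i \<Rightarrow> 'a::banach set" and T :: "'i set"
  assumes "reflexive_space TYPE('a)"
    and "T \<noteq> {}"
    and "\<And>t. t \<in> T \<Longrightarrow> convex (F t) \<and> existence_set (F t)"
    and "\<And>t1 t2. t1 \<in> T \<Longrightarrow> t2 \<in> T \<Longrightarrow> \<exists>t3\<in>T. F t1 \<union> F t2 \<subseteq> F t3"
  shows "existence_set (closure (\<Union>t\<in>T. F t))"
proof -
  let ?A = "\<Union>t\<in>T. F t"
  obtain t0 c0 where "t0 \<in> T" "c0 \<in> F t0"
    using assms(2,3) unfolding existence_set_def by blast
  then have "c0 \<in> ?A" by blast
  have F_sub: "F t \<subseteq> closure ?A" if "t \<in> T" for t
    using UN_upper[OF that, of F] closure_subset by (rule order_trans)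
  have "convex (closure ?A)"
    using assms(3,4) by (intro convex_closure convex_UN_directed) blast+
  have "transp (\<lambda>s t. F s \<subseteq> F t)" by (auto intro: transpI)
  moreover have "\<exists>c\<in>T. F a \<subseteq> F c \<and> F b \<subseteq> F c" if "a \<in> T" "b \<in> T" for a b
    using assms(4)[OF that] by blast
  ultimately obtain U where U: "ultrafilter U"
    and eventually_above: "\<And>s. s \<in> T \<Longrightarrow> eventually (\<lambda>t. t \<in> T \<and> F s \<subseteq> F t) U"
    using directed_ultrafilter[OF assms(2)] by blast
  have "R_set (closure ?A) x \<noteq> {}" for x
  proof -
    have "\<forall>t\<in>T. \<exists>d. d \<in> R_set (F t) x"
      using assms(3) unfolding existence_set_def by blast
    then obtain n where n: "\<And>t. t \<in> T \<Longrightarrow> n t \<in> R_set (F t) x"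
      by (metis bchoice)
    have "eventually (\<lambda>t. n t \<in> closure ?A \<inter> cball c (norm (x - c))) U" if "c \<in> ?A" for c
    proof -
      from that obtain s where "s \<in> T" "c \<in> F s" by blast
      show ?thesis
        using eventually_above[OF \<open>s \<in> T\<close>] by (rule eventually_mono)
          (use n F_sub \<open>c \<in> F s\<close> in \<open>auto simp: R_set_def dist_norm norm_minus_commute\<close>)
    qed
    then show ?thesis
      by (rule R_set_closure_nonempty_weak_limit[OF assms(1) U \<open>convex (closure ?A)\<close> \<open>c0 \<in> ?A\<close>])
  qed
  moreover have "closure ?A \<noteq> {}"
    using closure_subset \<open>c0 \<in> ?A\<close> by (metis empty_iff subsetD)
  ultimately show ?thesis unfolding existence_set_def by blast
qed

end
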